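(* If $G$ is a finite simple unmixed graph without induced $4$-cycles, then $I_c(G)$ is linearly presented.
   Context: $G$ has vertices $t_1,\dots,t_s$, $S=K[t_1,\dots,t_s]$, $K$ a field. $G$ is unmixed if all minimal vertex covers (inclusion-minimal vertex sets meeting every edge) have equal size. $I_c(G)$ is the ideal generated by $\prod_{t_i\in C}t_i$ over the minimal vertex covers $C$ of $G$. A monomial ideal minimally generated by $u_1,\dots,u_r$ is linearly presented if all $u_i$ have the same degree and the kernel of $S^r\to S$, $e_i\mapsto u_i$, is generated by vectors whose entries are linear forms. *)

theory Defs
  imports Main "HOL-Library.Poly_Mapping"
begin

definition simple_graph :: "'v set \<Rightarrow> 'v set set \<Rightarrow> bool" where
  "simple_graph V E \<longleftrightarrow> finite V \<and> (\<forall>e\<in>E. e \<subseteq> V \<and> card e = 2)"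

definition vertex_cover :: "'v set \<Rightarrow> 'v set set \<Rightarrow> 'v set \<Rightarrow> bool" where
  "vertex_cover V E C \<longleftrightarrow> C \<subseteq> V \<and> (\<forall>e\<in>E. e \<inter> C \<noteq> {})"

definition minimal_vertex_cover :: "'v set \<Rightarrow> 'v set set \<Rightarrow> 'v set \<Rightarrow> bool" where
  "minimal_vertex_cover V E C \<longleftrightarrow> vertex_cover V E C \<and>
     (\<forall>D. D \<subset> C \<longrightarrow> \<not> vertex_cover V E D)"

definition unmixed :: "'v set \<Rightarrow> 'v set set \<Rightarrow> bool" where
  "unmixed V E \<longleftrightarrow> (\<forall>C D. minimal_vertex_cover V E C \<longrightarrow> minimal_vertex_cover V E D
      \<longrightarrow> card C = card D)"

definition has_induced_C4 :: "'v set \<Rightarrow> 'v set set \<Rightarrow> bool" where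
  "has_induced_C4 V E \<longleftrightarrow> (\<exists>a b c d. a \<in> V \<and> b \<in> V \<and> c \<in> V \<and> d \<in> V \<and>
     distinct [a, b, c, d] \<and>
     {a, b} \<in> E \<and> {b, c} \<in> E \<and> {c, d} \<in> E \<and> {d, a} \<in> E \<and>
     {a, c} \<notin> E \<and> {b, d} \<notin> E)"

type_synonym ('v, 'k) mpoly = "('v \<Rightarrow>\<^sub>0 nat) \<Rightarrow>\<^sub>0 'k"

definition monom :: "('v \<Rightarrow>\<^sub>0 nat) \<Rightarrow> ('v, 'k::field) mpoly" where
  "monom a = Poly_Mapping.single a 1"

definition tdeg :: "('v \<Rightarrow>\<^sub>0 nat) \<Rightarrow> nat" where
  "tdeg a = (\<Sum>v\<in>Poly_Mapping.keys a. Poly_Mapping.lookup a v)"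

definition sqfree_exp :: "'v set \<Rightarrow> ('v \<Rightarrow>\<^sub>0 nat)" where
  "sqfree_exp C = (\<Sum>v\<in>C. Poly_Mapping.single v 1)"

definition ideal_gen :: "('v, 'k::field) mpoly set \<Rightarrow> ('v, 'k) mpoly set" where
  "ideal_gen U = {p. \<exists>F c. finite F \<and> F \<subseteq> U \<and> p = (\<Sum>u\<in>F. c u * u)}"

definition cover_ideal :: "'v set \<Rightarrow> 'v set set \<Rightarrow> ('v, 'k::field) mpoly set" where
  "cover_ideal V E = ideal_gen {monom (sqfree_exp C) | C. minimal_vertex_cover V E C}"

definition min_monomial_gens :: "('v, 'k::field) mpoly set \<Rightarrow> ('v \<Rightarrow>\<^sub>0 nat) set" where
  "min_monomial_gens I = {a. monom a \<in> I \<and>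
      (\<forall>b. (\<forall>v. Poly_Mapping.lookup b v \<le> Poly_Mapping.lookup a v) \<and> b \<noteq> a \<longrightarrow> monom b \<notin> I)}"

definition linear_form :: "('v, 'k::field) mpoly \<Rightarrow> bool" where
  "linear_form p \<longleftrightarrow> (\<forall>m\<in>Poly_Mapping.keys p. tdeg m = 1)"

text \<open>Kernel of S^M \<rightarrow> S, e_a \<mapsto> t^a, for a finite index set M of exponent vectors.
  Vectors are functions M \<rightarrow> S (zero outside M).\<close>
definition syz :: "('v \<Rightarrow>\<^sub>0 nat) set \<Rightarrow> (('v \<Rightarrow>\<^sub>0 nat) \<Rightarrow> ('v, 'k::field) mpoly) set" where
  "syz M = {f. (\<forall>a. a \<notin> M \<longrightarrow> f a = 0) \<and> (\<Sum>a\<in>M. f a * monom a) = 0}"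

definition module_span ::
  "(('v \<Rightarrow>\<^sub>0 nat) \<Rightarrow> ('v, 'k::field) mpoly) set \<Rightarrow> (('v \<Rightarrow>\<^sub>0 nat) \<Rightarrow> ('v, 'k) mpoly) set" where
  "module_span L = {f. \<exists>F c. finite F \<and> F \<subseteq> L \<and> f = (\<lambda>a. \<Sum>g\<in>F. c g * g a)}"

definition linearly_presented :: "('v, 'k::field) mpoly set \<Rightarrow> bool" where
  "linearly_presented I \<longleftrightarrow>
     (let M = min_monomial_gens I in
       finite M \<and>
       (\<forall>a\<in>M. \<forall>b\<in>M. tdeg a = tdeg b) \<and>
       (\<exists>L :: (('v \<Rightarrow>\<^sub>0 nat) \<Rightarrow> ('v, 'k) mpoly) set. L \<subseteq> syz M \<and> (\<forall>g\<in>L. \<forall>a\<in>M. linear_form (g a)) \<and>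
            syz M \<subseteq> module_span L))"

end

theory Submission
  imports Defs
begin

(* The minimal vertex covers of G are the complements of its maximal independent sets, so
  unmixedness says that all maximal independent sets have the same size. In such a graph
  without induced 4-cycles, any two maximal independent sets A and B are joined by a chain of
  maximal independent sets containing A \<inter> B in which consecutive sets differ by exchanging
  one vertex. To bring a vertex y of B - A into A: either y has a unique neighbour in A and is
  swapped for it, or the vertices of A not adjacent to y, together with y, are too few to form
  a maximal independent set; a vertex z extending them then has, since there is no induced
  4-cycle through y and z, a unique neighbour in A, and is swapped in first.

  The syzygies of the monomials t^a, a \<in> M, are generated by the binomial syzygies
  t^(\<gamma> - a) e_a - t^(\<gamma> - b) e_b. Along an exchange chain from V - C to V - D such a
  binomial telescopes into multiples of syzygies between covers differing in one vertex,
  and these are linear. *)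

section \<open>Independent sets and vertex covers\<close>

definition indep_set :: "'v set \<Rightarrow> 'v set set \<Rightarrow> 'v set \<Rightarrow> bool" where
  "indep_set V E A \<longleftrightarrow> A \<subseteq> V \<and> (\<forall>e\<in>E. \<not> e \<subseteq> A)"

definition max_indep_set :: "'v set \<Rightarrow> 'v set set \<Rightarrow> 'v set \<Rightarrow> bool" where
  "max_indep_set V E A \<longleftrightarrow>
     indep_set V E A \<and> (\<forall>v\<in>V - A. \<not> indep_set V E (insert v A))"

lemma indep_set_subset: "indep_set V E A \<Longrightarrow> B \<subseteq> A \<Longrightarrow> indep_set V E B"
  unfolding indep_set_def by blast

lemma indep_set_no_edge: "indep_set V E A \<Longrightarrow> x \<in> A \<Longrightarrow> y \<in> A \<Longrightarrow> {x, y} \<notin> E"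
  by (auto simp: indep_set_def)

locale finite_simple_graph =
  fixes V :: "'v set" and E :: "'v set set"
  assumes simple_graph: "simple_graph V E"
begin

lemma finite_vertices: "finite V"
  using simple_graph by (simp add: simple_graph_def)

lemma edge_subset_vertices: "e \<in> E \<Longrightarrow> e \<subseteq> V"
  using simple_graph by (simp add: simple_graph_def)

lemma edge_doubleton: "e \<in> E \<Longrightarrow> \<exists>x y. x \<noteq> y \<and> e = {x, y}"
  using simple_graph unfolding simple_graph_def by (metis card_2_iff)

lemma edge_endpoints: "{x, y} \<in> E \<Longrightarrow> x \<in> V \<and> y \<in> V \<and> x \<noteq> y"
  using edge_subset_vertices edge_doubleton by (metis doubleton_eq_iff insert_subset)

lemma finite_indep_set: "indep_set V E A \<Longrightarrow> finite A"
  using finite_vertices by (auto simp: indep_set_def intro: finite_subset)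

lemma indep_set_insert:
  assumes "indep_set V E A" "y \<in> V" "\<forall>a\<in>A. {y, a} \<notin> E"
  shows "indep_set V E (insert y A)"
proof -
  have "\<not> e \<subseteq> insert y A" if "e \<in> E" for e
    using that edge_doubleton[OF that] assms by (auto simp: indep_set_def insert_commute)
  then show ?thesis using assms by (auto simp: indep_set_def)
qed

lemma max_indep_set_neighbour:
  assumes "max_indep_set V E A" "y \<in> V" "y \<notin> A"
  obtains x where "x \<in> A" "{y, x} \<in> E"
  using assms indep_set_insert by (meson DiffI max_indep_set_def)

lemma indep_set_extend:
  assumes "indep_set V E X"
  obtains Z where "max_indep_set V E Z" "X \<subseteq> Z"
  using assms
proof (induction "card (V - X)" arbitrary: X rule: less_induct)
  case less
  show ?case
  proof (cases "max_indep_set V E X")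
    case False
    then obtain v where v: "v \<in> V - X" "indep_set V E (insert v X)"
      using less.prems by (auto simp: max_indep_set_def)
    have "card (V - insert v X) < card (V - X)"
      using v finite_vertices by (intro psubset_card_mono) auto
    then show ?thesis using less.hyps v less.prems(1) by blast
  qed (use less.prems in blast)
qed

lemma max_indep_set_subset_eq:
  assumes "max_indep_set V E B" "indep_set V E A" "B \<subseteq> A"
  shows "A = B"
proof (rule ccontr)
  assume "A \<noteq> B"
  then obtain v where "v \<in> A - B" using assms(3) by blast
  moreover have "indep_set V E (insert v B)"
    using assms(2,3) \<open>v \<in> A - B\<close> by (auto intro: indep_set_subset)
  moreover have "A \<subseteq> V" using assms(2) by (simp add: indep_set_def)
  ultimately show False using assms(1) by (auto simp: max_indep_set_def)
qed

lemma vertex_cover_iff: "vertex_cover V E C \<longleftrightarrow> C \<subseteq> V \<and> indep_set V E (V - C)"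
proof -
  have "e \<inter> C \<noteq> {} \<longleftrightarrow> \<not> e \<subseteq> V - C" if "e \<in> E" for e
    using edge_subset_vertices[OF that] by blast
  then show ?thesis unfolding vertex_cover_def indep_set_def by (simp add: Diff_subset)
qed

lemma minimal_vertex_cover_iff:
  "minimal_vertex_cover V E C \<longleftrightarrow> C \<subseteq> V \<and> max_indep_set V E (V - C)"
proof (cases "C \<subseteq> V")
  case True
  have "(\<exists>D. D \<subset> C \<and> indep_set V E (V - D)) \<longleftrightarrow> (\<exists>v\<in>C. indep_set V E (insert v (V - C)))"
  proof
    assume "\<exists>D. D \<subset> C \<and> indep_set V E (V - D)"
    then obtain D v where "D \<subset> C" "indep_set V E (V - D)" "v \<in> C - D" by blast
    then show "\<exists>v\<in>C. indep_set V E (insert v (V - C))"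
      using True indep_set_subset[of V E "V - D" "insert v (V - C)"] by blast
  next
    assume "\<exists>v\<in>C. indep_set V E (insert v (V - C))"
    then obtain v where "v \<in> C" "indep_set V E (insert v (V - C))" by blast
    moreover have "V - (C - {v}) = insert v (V - C)" using \<open>v \<in> C\<close> True by blast
    ultimately show "\<exists>D. D \<subset> C \<and> indep_set V E (V - D)"
      by (intro exI[of _ "C - {v}"]) auto
  qed
  moreover have "minimal_vertex_cover V E C \<longleftrightarrow>
      indep_set V E (V - C) \<and> \<not> (\<exists>D. D \<subset> C \<and> indep_set V E (V - D))"
    using True unfolding minimal_vertex_cover_def vertex_cover_iff by (blast dest: psubset_imp_subset)
  moreover have "max_indep_set V E (V - C) \<longleftrightarrow>
      indep_set V E (V - C) \<and> \<not> (\<exists>v\<in>C. indep_set V E (insert v (V - C)))"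
    using True unfolding max_indep_set_def by (simp add: double_diff)
  ultimately show ?thesis using True by blast
qed (simp add: minimal_vertex_cover_def vertex_cover_def)

lemma max_indep_set_subset_vertices: "max_indep_set V E A \<Longrightarrow> A \<subseteq> V"
  by (simp add: max_indep_set_def indep_set_def)

lemma minimal_vertex_cover_complement:
  assumes "max_indep_set V E A"
  shows "minimal_vertex_cover V E (V - A)"
proof -
  have "V - (V - A) = A" using max_indep_set_subset_vertices[OF assms] by blast
  then show ?thesis using assms by (simp add: minimal_vertex_cover_iff)
qed

lemma unmixed_max_indep_set_card_eq:
  assumes "unmixed V E" "max_indep_set V E A" "max_indep_set V E B"
  shows "card A = card B"
proof -
  have "card (V - A) = card (V - B)"
    using assms minimal_vertex_cover_complement by (simp add: unmixed_def)
  then show ?thesis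
    using assms(2,3) max_indep_set_subset_vertices finite_vertices
    by (metis card_Diff_subset card_mono diff_diff_cancel finite_subset)
qed

lemma C4_free_common_neighbour_unique:
  assumes "\<not> has_induced_C4 V E" "y \<noteq> z" "{y, z} \<notin> E" "{w, x} \<notin> E"
    and "{y, w} \<in> E" "{y, x} \<in> E" "{z, w} \<in> E" "{z, x} \<in> E"
  shows "w = x"
proof (rule ccontr)
  assume "w \<noteq> x"
  then have "distinct [y, w, z, x]" using assms(2,5-8) edge_endpoints by auto
  moreover have "{w, z} \<in> E" "{x, y} \<in> E" using assms(6,7) by (simp_all add: insert_commute)
  ultimately have "has_induced_C4 V E"
    unfolding has_induced_C4_def using assms(3-5,8) edge_endpoints by blast
  then show False using assms(1) by blast
qed

end

section \<open>Exchange paths in well-covered graphs without induced 4-cycles\<close>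

definition exchange_step :: "'v set \<Rightarrow> 'v set set \<Rightarrow> 'v set \<Rightarrow> 'v set \<Rightarrow> 'v set \<Rightarrow> bool" where
  "exchange_step V E S X Y \<longleftrightarrow>
     max_indep_set V E X \<and> max_indep_set V E Y \<and> card (X - Y) = 1 \<and> S \<subseteq> X \<inter> Y"

lemma exchange_path_antimono:
  assumes "S \<subseteq> S'" "(exchange_step V E S')\<^sup>*\<^sup>* X Y"
  shows "(exchange_step V E S)\<^sup>*\<^sup>* X Y"
  using assms(2)
proof (induction rule: rtranclp_induct)
  case (step Y Z)
  then show ?case using assms(1) by (auto simp: exchange_step_def intro: rtranclp.rtrancl_into_rtrancl)
qed simp

lemma exchange_path_max_indep_set:
  assumes "(exchange_step V E S)\<^sup>*\<^sup>* X Y" "max_indep_set V E X" "S \<subseteq> X"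
  shows "max_indep_set V E Y \<and> S \<subseteq> Y"
  using assms by (induction rule: rtranclp_induct) (auto simp: exchange_step_def)

locale well_covered_graph = finite_simple_graph V E for V :: "'v set" and E +
  assumes max_indep_set_card_eq:
    "max_indep_set V E A \<Longrightarrow> max_indep_set V E B \<Longrightarrow> card A = card B"
begin

lemma indep_set_extendable:
  assumes "indep_set V E U" "max_indep_set V E B" "card U < card B"
  obtains z where "z \<in> V - U" "indep_set V E (insert z U)"
proof -
  have "\<not> max_indep_set V E U" using max_indep_set_card_eq[OF _ assms(2)] assms(3) by auto
  then show ?thesis using assms(1) that unfolding max_indep_set_def by blast
qed

lemma max_indep_set_if_card_eq:
  assumes "indep_set V E X" "max_indep_set V E B" "card X = card B"
  shows "max_indep_set V E X"
proof -
  obtain Z where Z: "max_indep_set V E Z" "X \<subseteq> Z" using indep_set_extend assms(1) by blast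
  have "finite Z" using Z(1) finite_indep_set by (simp add: max_indep_set_def)
  moreover have "card Z = card X" using max_indep_set_card_eq[OF Z(1) assms(2)] assms(3) by simp
  ultimately have "X = Z" using Z(2) by (simp add: card_subset_eq)
  then show ?thesis using Z(1) by simp
qed

lemma max_indep_set_exchange:
  assumes "max_indep_set V E A" "y \<in> V - A" "x \<in> A" "\<forall>w\<in>A. {y, w} \<in> E \<longrightarrow> w = x"
  shows "max_indep_set V E (insert y (A - {x}))"
proof (rule max_indep_set_if_card_eq[OF _ assms(1)])
  have "indep_set V E (A - {x})"
    using assms(1) by (auto simp: max_indep_set_def intro: indep_set_subset)
  then show "indep_set V E (insert y (A - {x}))"
    using assms(2,4) by (intro indep_set_insert) auto
  have "finite A" using assms(1) finite_indep_set by (simp add: max_indep_set_def)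
  moreover have "card A > 0" using \<open>finite A\<close> assms(3) card_gt_0_iff by blast
  ultimately show "card (insert y (A - {x})) = card A"
    using assms(2,3) by (simp add: card_insert_if)
qed

lemma exchange_step_swap:
  assumes "max_indep_set V E A" "y \<in> V - A" "x \<in> A" "\<forall>w\<in>A. {y, w} \<in> E \<longrightarrow> w = x"
    and "S \<subseteq> A - {x}"
  shows "exchange_step V E S A (insert y (A - {x}))"
proof -
  have "A - insert y (A - {x}) = {x}" using assms(2,3) by blast
  then show ?thesis
    using assms max_indep_set_exchange unfolding exchange_step_def by auto
qed

end

locale well_covered_C4_free_graph = well_covered_graph V E for V :: "'v set" and E +
  assumes C4_free: "\<not> has_induced_C4 V E"
begin

lemma nonneighbour_with_unique_neighbour:
  assumes A: "max_indep_set V E A" and y: "y \<in> V - A"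
    and x: "x \<in> A" "{y, x} \<in> E" "x' \<in> A" "{y, x'} \<in> E" "x \<noteq> x'"
  defines "T \<equiv> {a \<in> A. {y, a} \<notin> E}"
  obtains z w where "z \<in> V - A" "z \<noteq> y" "{y, z} \<notin> E" "\<forall>t\<in>T. {z, t} \<notin> E"
    "w \<in> A - T" "\<forall>u\<in>A. {z, u} \<in> E \<longrightarrow> u = w"
proof -
  have A_indep: "indep_set V E A" and "finite A"
    using A finite_indep_set by (auto simp: max_indep_set_def)
  have T_indep: "indep_set V E (insert y T)"
    using y by (intro indep_set_insert indep_set_subset[OF A_indep]) (auto simp: T_def)
  have "card (insert x (insert x' T)) \<le> card A"
    using \<open>finite A\<close> x by (intro card_mono) (auto simp: T_def)
  then have "card (insert y T) < card A"
    using \<open>finite A\<close> x y by (simp add: T_def)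
  then obtain z where z: "z \<in> V - insert y T" "indep_set V E (insert z (insert y T))"
    using indep_set_extendable[OF T_indep A] by blast
  have zy: "{y, z} \<notin> E" and zT: "\<forall>t\<in>T. {z, t} \<notin> E"
    using indep_set_no_edge[OF z(2)] by blast+
  have "z \<notin> A" using z zy by (auto simp: T_def)
  then obtain w where w: "w \<in> A" "{z, w} \<in> E" using max_indep_set_neighbour A z by blast
  have "u = w" if "u \<in> A" "{z, u} \<in> E" for u
  proof (rule C4_free_common_neighbour_unique[OF C4_free])
    show "{y, u} \<in> E" "{y, w} \<in> E" using that w zT by (auto simp: T_def)
  qed (use z zy that w indep_set_no_edge[OF A_indep that(1) w(1)] in auto)
  moreover have "w \<in> A - T" using w zT by auto
  ultimately show ?thesis using that z zy zT \<open>z \<notin> A\<close> w by blast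
qed

lemma exchange_path_to_vertex:
  assumes "max_indep_set V E A" "S \<subseteq> A" "y \<in> V - A" "\<forall>s\<in>S. {y, s} \<notin> E"
  shows "\<exists>A'. (exchange_step V E S)\<^sup>*\<^sup>* A A' \<and> y \<in> A'"
  using assms
proof (induction "card (A - S)" arbitrary: S A rule: less_induct)
  case less
  define T where "T = {a \<in> A. {y, a} \<notin> E}"
  have "S \<subseteq> T" using less.prems(2,4) by (auto simp: T_def)
  obtain x where x: "x \<in> A" "{y, x} \<in> E"
    using max_indep_set_neighbour less.prems(1,3) by blast
  show ?case
  proof (cases "\<forall>w\<in>A. {y, w} \<in> E \<longrightarrow> w = x")
    case True
    have "S \<subseteq> A - {x}" using \<open>S \<subseteq> T\<close> x by (auto simp: T_def)
    then have "exchange_step V E S A (insert y (A - {x}))"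
      using exchange_step_swap less.prems(1,3) x(1) True by blast
    then show ?thesis by blast
  next
    case False
    then obtain x' where "x' \<in> A" "{y, x'} \<in> E" "x \<noteq> x'" by blast
    then obtain z w where z: "z \<in> V - A" "z \<noteq> y" "{y, z} \<notin> E" "\<forall>t\<in>T. {z, t} \<notin> E"
      and w: "w \<in> A - T" "\<forall>u\<in>A. {z, u} \<in> E \<longrightarrow> u = w"
      using nonneighbour_with_unique_neighbour[OF less.prems(1,3) x] unfolding T_def by blast
    define A' where "A' = insert z (A - {w})"
    have "T \<subseteq> A - {w}" using w(1) by (auto simp: T_def)
    then have step: "exchange_step V E S A A'"
      using exchange_step_swap[OF less.prems(1) z(1) _ w(2)] w(1) \<open>S \<subseteq> T\<close> by (auto simp: A'_def)
    have "A' - insert z T \<subset> A - S" using w(1) z(1) \<open>S \<subseteq> T\<close> by (auto simp: A'_def T_def)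
    then have "card (A' - insert z T) < card (A - S)"
      using less.prems(1) finite_indep_set by (intro psubset_card_mono) (auto simp: max_indep_set_def)
    moreover have "max_indep_set V E A'" "insert z T \<subseteq> A'" "y \<in> V - A'"
      "\<forall>s\<in>insert z T. {y, s} \<notin> E"
      using step less.prems(3) z \<open>T \<subseteq> A - {w}\<close> by (auto simp: exchange_step_def A'_def T_def)
    ultimately have "\<exists>A''. (exchange_step V E (insert z T))\<^sup>*\<^sup>* A' A'' \<and> y \<in> A''"
      by (rule less.hyps)
    then obtain A'' where path: "(exchange_step V E (insert z T))\<^sup>*\<^sup>* A' A''" "y \<in> A''"
      by blast
    have "(exchange_step V E S)\<^sup>*\<^sup>* A A''"
      using step exchange_path_antimono[OF _ path(1)] \<open>S \<subseteq> T\<close>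
      by (blast intro: converse_rtranclp_into_rtranclp)
    then show ?thesis using path(2) by blast
  qed
qed

lemma exchange_path:
  assumes "max_indep_set V E A" "max_indep_set V E B" "S \<subseteq> A \<inter> B"
  shows "(exchange_step V E S)\<^sup>*\<^sup>* A B"
  using assms
proof (induction "card (B - S)" arbitrary: S A rule: less_induct)
  case less
  show ?case
  proof (cases "B \<subseteq> A")
    case True
    then show ?thesis
      using max_indep_set_subset_eq less.prems(1,2) by (metis max_indep_set_def rtranclp.rtrancl_refl)
  next
    case False
    then obtain y where y: "y \<in> B - A" by blast
    have B_indep: "indep_set V E B" using less.prems(2) by (simp add: max_indep_set_def)
    then have "y \<in> V" "\<forall>s\<in>S. {y, s} \<notin> E"
      using y less.prems(3) indep_set_no_edge[OF B_indep] by (auto simp: indep_set_def)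
    then obtain A' where A': "(exchange_step V E S)\<^sup>*\<^sup>* A A'" "y \<in> A'"
      using exchange_path_to_vertex less.prems(1,3) y by blast
    then have "max_indep_set V E A'" "S \<subseteq> A'"
      using exchange_path_max_indep_set less.prems(1,3) by blast+
    moreover have "card (B - insert y S) < card (B - S)"
      using y less.prems(3) B_indep finite_indep_set by (intro psubset_card_mono) auto
    ultimately have "(exchange_step V E (insert y S))\<^sup>*\<^sup>* A' B"
      using less.hyps less.prems(2,3) y A'(2) by auto
    then have "(exchange_step V E S)\<^sup>*\<^sup>* A' B"
      by (rule exchange_path_antimono[rotated]) blast
    then show ?thesis using A'(1) by (rule rtranclp_trans[rotated])
  qed
qed

end

section \<open>Monomials and monomial ideals\<close>

definition le_pm :: "('v \<Rightarrow>\<^sub>0 nat) \<Rightarrow> ('v \<Rightarrow>\<^sub>0 nat) \<Rightarrow> bool" where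
  "le_pm a b \<longleftrightarrow> (\<forall>v. Poly_Mapping.lookup a v \<le> Poly_Mapping.lookup b v)"

lemma le_pm_refl: "le_pm a a"
  by (simp add: le_pm_def)

lemma le_pm_trans: "le_pm a b \<Longrightarrow> le_pm b c \<Longrightarrow> le_pm a c"
  unfolding le_pm_def using order_trans by blast

lemma le_pm_antisym: "le_pm a b \<Longrightarrow> le_pm b a \<Longrightarrow> a = b"
  unfolding le_pm_def by (intro poly_mapping_eqI) (meson antisym)

lemma le_pm_add: "le_pm a (d + a)"
  by (simp add: le_pm_def lookup_add)

lemma le_pm_diff_add: "le_pm a b \<Longrightarrow> (b - a) + a = b"
  by (rule poly_mapping_eqI) (simp add: le_pm_def lookup_add lookup_minus)

lemma lookup_sqfree_exp: "finite C \<Longrightarrow> Poly_Mapping.lookup (sqfree_exp C) v = (if v \<in> C then 1 else 0)"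
  by (simp add: sqfree_exp_def lookup_sum lookup_single when_def)

lemma le_pm_sqfree_exp_iff:
  "finite C \<Longrightarrow> finite D \<Longrightarrow> le_pm (sqfree_exp C) (sqfree_exp D) \<longleftrightarrow> C \<subseteq> D"
  by (auto simp: le_pm_def lookup_sqfree_exp split: if_splits)

lemma sqfree_exp_Un: "finite C \<Longrightarrow> finite D \<Longrightarrow> sqfree_exp (C \<union> D) = sqfree_exp (D - C) + sqfree_exp C"
  by (intro poly_mapping_eqI) (simp add: lookup_add lookup_sqfree_exp)

lemma keys_sqfree_exp: "finite C \<Longrightarrow> Poly_Mapping.keys (sqfree_exp C) = C"
  by (auto simp: in_keys_iff lookup_sqfree_exp split: if_splits)

lemma tdeg_sqfree_exp: "finite C \<Longrightarrow> tdeg (sqfree_exp C) = card C"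
  by (simp add: tdeg_def keys_sqfree_exp lookup_sqfree_exp)

lemma sqfree_exp_Un_diff: "finite C \<Longrightarrow> finite D \<Longrightarrow> sqfree_exp (C \<union> D) - sqfree_exp C = sqfree_exp (D - C)"
  by (simp add: sqfree_exp_Un)

lemma le_pm_sqfree_exp_Un:
  assumes "finite C" "finite D" "le_pm (sqfree_exp C) \<gamma>" "le_pm (sqfree_exp D) \<gamma>"
  shows "le_pm (sqfree_exp (C \<union> D)) \<gamma>"
  using assms by (auto simp: le_pm_def lookup_sqfree_exp split: if_splits)

lemma monom_mult: "(monom a :: ('v, 'k::field) mpoly) * monom b = monom (a + b)"
  by (simp add: monom_def mult_single)

lemma lookup_mult_monom:
  "Poly_Mapping.lookup (p * (monom e :: ('v, 'k::field) mpoly)) (d + e) = Poly_Mapping.lookup p d"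
proof -
  have "(\<Sum>q. ((1::'k) when e = q) when d + e = l + q) = (1 when l = d)" for l
  proof -
    have "(\<Sum>q. ((1::'k) when e = q) when d + e = l + q) = (\<Sum>q. ((1::'k) when d + e = l + q) when e = q)"
      by (simp only: when_commute)
    also have "\<dots> = (1 when d + e = l + e)" by (rule Sum_any_when_equal')
    also have "\<dots> = (1 when l = d)" by (rule when_cong) auto
    finally show ?thesis .
  qed
  then show ?thesis
    by (simp only: lookup_mult monom_def lookup_single mult_when mult_1_right Sum_any_when_equal)
qed

lemma lookup_mult_monom_eq_0:
  assumes "\<nexists>d. g = d + e"
  shows "Poly_Mapping.lookup (p * (monom e :: ('v, 'k::field) mpoly)) g = 0"
proof -
  have "Poly_Mapping.keys (monom e :: ('v, 'k) mpoly) = {e}" by (simp add: monom_def)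
  then have "Poly_Mapping.keys (p * monom e) \<subseteq> {d + e | d. True}"
    using keys_mult[of p "monom e"] by auto
  then have "g \<notin> Poly_Mapping.keys (p * monom e)"
    using assms by blast
  then show ?thesis by (meson in_keys_iff)
qed

lemma ideal_gen_mult_mem: "u \<in> U \<Longrightarrow> p * u \<in> ideal_gen U"
  unfolding ideal_gen_def by (intro CollectI exI[of _ "{u}"] exI[of _ "\<lambda>_. p"]) simp

lemma monom_mem_ideal_gen_iff:
  "(monom a :: ('v, 'k::field) mpoly) \<in> ideal_gen (monom ` X) \<longleftrightarrow> (\<exists>e\<in>X. le_pm e a)"
proof
  assume "(monom a :: ('v, 'k) mpoly) \<in> ideal_gen (monom ` X)"
  then obtain F c where F: "finite F" "F \<subseteq> monom ` X" "(monom a :: ('v, 'k) mpoly) = (\<Sum>u\<in>F. c u * u)"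
    unfolding ideal_gen_def by blast
  have "(\<Sum>u\<in>F. Poly_Mapping.lookup (c u * u) a) = Poly_Mapping.lookup (monom a :: ('v, 'k) mpoly) a"
    by (simp add: F(3) lookup_sum)
  also have "\<dots> \<noteq> 0" by (simp add: monom_def)
  finally obtain u where u: "u \<in> F" "Poly_Mapping.lookup (c u * u) a \<noteq> 0"
    by (rule sum.not_neutral_contains_not_neutral)
  then obtain e where "e \<in> X" "u = monom e" using F(2) by blast
  then show "\<exists>e\<in>X. le_pm e a"
    using lookup_mult_monom_eq_0[of a e "c u"] u le_pm_add by blast
next
  assume "\<exists>e\<in>X. le_pm e a"
  then obtain e where "e \<in> X" "le_pm e a" by blast
  then have "(monom a :: ('v, 'k) mpoly) = monom (a - e) * monom e"
    by (simp add: monom_mult le_pm_diff_add)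
  then show "(monom a :: ('v, 'k) mpoly) \<in> ideal_gen (monom ` X)"
    using ideal_gen_mult_mem[of "monom e" "monom ` X" "monom (a - e)"] \<open>e \<in> X\<close> by simp
qed

lemma min_monomial_gens_ideal_gen:
  assumes antichain: "\<And>a b. a \<in> X \<Longrightarrow> b \<in> X \<Longrightarrow> le_pm a b \<Longrightarrow> a = b"
  shows "min_monomial_gens (ideal_gen (monom ` X) :: ('v, 'k::field) mpoly set) = X"
proof -
  have "(\<exists>e\<in>X. le_pm e a) \<and> (\<forall>b. le_pm b a \<and> b \<noteq> a \<longrightarrow> \<not> (\<exists>e\<in>X. le_pm e b))
      \<longleftrightarrow> a \<in> X" for a
  proof
    assume "(\<exists>e\<in>X. le_pm e a) \<and> (\<forall>b. le_pm b a \<and> b \<noteq> a \<longrightarrow> \<not> (\<exists>e\<in>X. le_pm e b))"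
    then obtain e where "e \<in> X" "le_pm e a" "e = a" using le_pm_refl by blast
    then show "a \<in> X" by simp
  next
    assume "a \<in> X"
    have "b = a" if "le_pm b a" "e \<in> X" "le_pm e b" for b e
      using antichain[OF that(2) \<open>a \<in> X\<close>] le_pm_trans le_pm_antisym that by metis
    then show "(\<exists>e\<in>X. le_pm e a) \<and> (\<forall>b. le_pm b a \<and> b \<noteq> a \<longrightarrow> \<not> (\<exists>e\<in>X. le_pm e b))"
      using \<open>a \<in> X\<close> le_pm_refl by blast
  qed
  then show ?thesis
    unfolding min_monomial_gens_def le_pm_def[symmetric] monom_mem_ideal_gen_iff by blast
qed

section \<open>Syzygies of monomials\<close>

lemma module_span_zero: "(\<lambda>a. 0) \<in> module_span L"
  unfolding module_span_def by (intro CollectI exI[of _ "{}"]) simp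

lemma module_span_base: "g \<in> L \<Longrightarrow> g \<in> module_span L"
  unfolding module_span_def by (intro CollectI exI[of _ "{g}"] exI[of _ "\<lambda>_. 1"]) simp

lemma module_span_add:
  assumes "f \<in> module_span L" "g \<in> module_span L"
  shows "(\<lambda>a. f a + g a) \<in> module_span L"
proof -
  obtain F c where F: "finite F" "F \<subseteq> L" "f = (\<lambda>a. \<Sum>h\<in>F. c h * h a)"
    using assms(1) unfolding module_span_def by blast
  obtain G d where G: "finite G" "G \<subseteq> L" "g = (\<lambda>a. \<Sum>h\<in>G. d h * h a)"
    using assms(2) unfolding module_span_def by blast
  define e where "e h = (if h \<in> F then c h else 0) + (if h \<in> G then d h else 0)" for h
  have "(\<Sum>h\<in>F \<union> G. e h * h a) = f a + g a" for a
  proof -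
    have "(\<Sum>h\<in>F \<union> G. e h * h a) =
        (\<Sum>h\<in>F \<union> G. if h \<in> F then c h * h a else 0) + (\<Sum>h\<in>F \<union> G. if h \<in> G then d h * h a else 0)"
      unfolding sum.distrib[symmetric] by (rule sum.cong) (auto simp: e_def distrib_right)
    then show ?thesis using F G by (simp add: sum.If_cases Int_absorb1)
  qed
  then show ?thesis unfolding module_span_def using F G
    by (intro CollectI exI[of _ "F \<union> G"] exI[of _ e]) auto
qed

lemma module_span_smult:
  assumes "f \<in> module_span L"
  shows "(\<lambda>a. p * f a) \<in> module_span L"
proof -
  obtain F c where F: "finite F" "F \<subseteq> L" "f = (\<lambda>a. \<Sum>h\<in>F. c h * h a)"
    using assms unfolding module_span_def by blast
  then have "(\<lambda>a. p * f a) = (\<lambda>a. \<Sum>h\<in>F. (p * c h) * h a)"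
    by (simp add: sum_distrib_left mult.assoc)
  then show ?thesis unfolding module_span_def using F
    by (intro CollectI exI[of _ F] exI[of _ "\<lambda>h. p * c h"]) simp
qed

lemma syz_diff:
  assumes "f \<in> syz M" "g \<in> syz M"
  shows "(\<lambda>a. f a - g a) \<in> syz M"
  using assms by (simp add: syz_def left_diff_distrib sum_subtractf)

lemma syz_smult:
  assumes "f \<in> syz M"
  shows "(\<lambda>a. p * f a) \<in> syz M"
  using assms by (simp add: syz_def mult.assoc flip: sum_distrib_left)

(* The term t^(\<gamma> - a) e_a of S^M, which maps to t^\<gamma> when a \<le> \<gamma>. *)
definition term_vec :: "('v \<Rightarrow>\<^sub>0 nat) \<Rightarrow> ('v \<Rightarrow>\<^sub>0 nat) \<Rightarrow> ('v \<Rightarrow>\<^sub>0 nat) \<Rightarrow> ('v, 'k::field) mpoly"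
  where "term_vec \<gamma> a = (\<lambda>b. if b = a then monom (\<gamma> - a) else 0)"

definition binom_syz ::
    "('v \<Rightarrow>\<^sub>0 nat) \<Rightarrow> ('v \<Rightarrow>\<^sub>0 nat) \<Rightarrow> ('v \<Rightarrow>\<^sub>0 nat) \<Rightarrow> ('v \<Rightarrow>\<^sub>0 nat) \<Rightarrow> ('v, 'k::field) mpoly"
  where "binom_syz \<gamma> a b = (\<lambda>x. term_vec \<gamma> a x - term_vec \<gamma> b x)"

lemma sum_term_vec:
  assumes "finite M" "a \<in> M" "le_pm a \<gamma>"
  shows "(\<Sum>x\<in>M. term_vec \<gamma> a x * monom x) = (monom \<gamma> :: ('v, 'k::field) mpoly)"
proof -
  have "(term_vec \<gamma> a x * monom x :: ('v, 'k) mpoly) = (if x = a then monom (\<gamma> - a) * monom a else 0)" for x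
    by (simp add: term_vec_def)
  then have "(\<Sum>x\<in>M. term_vec \<gamma> a x * monom x) = (monom (\<gamma> - a) * monom a :: ('v, 'k) mpoly)"
    using assms(1,2) by simp
  then show ?thesis using assms(3) by (simp add: monom_mult le_pm_diff_add)
qed

lemma binom_syz_mem_syz:
  assumes "finite M" "a \<in> M" "b \<in> M" "le_pm a \<gamma>" "le_pm b \<gamma>"
  shows "(binom_syz \<gamma> a b :: _ \<Rightarrow> ('v, 'k::field) mpoly) \<in> syz M"
proof -
  have "\<forall>x. x \<notin> M \<longrightarrow> (binom_syz \<gamma> a b x :: ('v, 'k) mpoly) = 0"
    using assms(2,3) by (auto simp: binom_syz_def term_vec_def)
  then show ?thesis
    using sum_term_vec[where 'k = 'k, OF assms(1,2,4)] sum_term_vec[where 'k = 'k, OF assms(1,3,5)]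
    by (simp add: syz_def binom_syz_def left_diff_distrib sum_subtractf)
qed

lemma binom_syz_trans: "(\<lambda>x. binom_syz \<gamma> a b x + binom_syz \<gamma> b c x) = binom_syz \<gamma> a c"
  by (simp add: binom_syz_def fun_eq_iff)

lemma monom_mult_binom_syz:
  assumes "le_pm a \<delta>" "le_pm b \<delta>" "le_pm \<delta> \<gamma>"
  shows "(\<lambda>x. monom (\<gamma> - \<delta>) * binom_syz \<delta> a b x) = (binom_syz \<gamma> a b :: _ \<Rightarrow> ('v, 'k::field) mpoly)"
proof -
  have "\<gamma> - \<delta> + (\<delta> - c) = \<gamma> - c" if "le_pm c \<delta>" for c
    using that assms(3) by (intro poly_mapping_eqI) (auto simp: le_pm_def lookup_add lookup_minus intro: order_trans)
  then show ?thesis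
    using assms by (auto simp: fun_eq_iff binom_syz_def term_vec_def right_diff_distrib monom_mult)
qed

lemma binom_syz_self: "binom_syz \<gamma> a a = (\<lambda>x. 0)"
  by (simp add: binom_syz_def)

lemma linear_form_monom: "tdeg m = 1 \<Longrightarrow> linear_form (monom m :: ('v, 'k::field) mpoly)"
  by (simp add: linear_form_def monom_def)

lemma linear_form_binom_syz:
  assumes "tdeg (\<gamma> - a) = 1" "tdeg (\<gamma> - b) = 1"
  shows "linear_form (binom_syz \<gamma> a b x :: ('v, 'k::field) mpoly)"
  using assms linear_form_monom[where 'k = 'k]
  by (auto simp: binom_syz_def term_vec_def linear_form_def)

lemma syz_term_cancelled:
  assumes "f \<in> syz M" "finite M" "a0 \<in> M" "\<beta> \<in> Poly_Mapping.keys (f a0)"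
  obtains a1 \<delta> where "a1 \<in> M" "a1 \<noteq> a0" "\<delta> \<in> Poly_Mapping.keys (f a1)" "\<delta> + a1 = \<beta> + a0"
proof -
  have "0 = Poly_Mapping.lookup (\<Sum>a\<in>M. f a * monom a) (\<beta> + a0)"
    using assms(1) by (simp add: syz_def)
  also have "\<dots> = Poly_Mapping.lookup (f a0 * monom a0) (\<beta> + a0)
      + (\<Sum>a\<in>M - {a0}. Poly_Mapping.lookup (f a * monom a) (\<beta> + a0))"
    using assms(2,3) by (simp add: lookup_sum sum.remove lookup_add)
  also have "Poly_Mapping.lookup (f a0 * monom a0) (\<beta> + a0) = Poly_Mapping.lookup (f a0) \<beta>"
    by (rule lookup_mult_monom)
  finally have "(\<Sum>a\<in>M - {a0}. Poly_Mapping.lookup (f a * monom a) (\<beta> + a0)) \<noteq> 0"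
    using assms(4) by (metis add.right_neutral in_keys_iff)
  then obtain a1 where a1: "a1 \<in> M - {a0}" "Poly_Mapping.lookup (f a1 * monom a1) (\<beta> + a0) \<noteq> 0"
    by (rule sum.not_neutral_contains_not_neutral)
  then obtain \<delta> where \<delta>: "\<beta> + a0 = \<delta> + a1" using lookup_mult_monom_eq_0 by blast
  then have "\<delta> \<in> Poly_Mapping.keys (f a1)" using a1(2) lookup_mult_monom by (metis in_keys_iff)
  then show ?thesis using a1(1) \<delta> by (intro that) auto
qed

lemma keys_diff_binom_syz:
  fixes f :: "('v \<Rightarrow>\<^sub>0 nat) \<Rightarrow> ('v, 'k::field) mpoly"
  assumes "a0 \<noteq> a1" "\<beta> \<in> Poly_Mapping.keys (f a0)" "\<delta> \<in> Poly_Mapping.keys (f a1)" "\<delta> + a1 = \<beta> + a0"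
  defines "f' \<equiv> \<lambda>a. f a - Poly_Mapping.single 0 (Poly_Mapping.lookup (f a0) \<beta>) * binom_syz (\<beta> + a0) a0 a1 a"
  shows "Poly_Mapping.keys (f' a0) \<subset> Poly_Mapping.keys (f a0)"
    and "Poly_Mapping.keys (f' a) \<subseteq> Poly_Mapping.keys (f a)"
proof -
  define c where "c = Poly_Mapping.lookup (f a0) \<beta>"
  have "\<beta> + a0 - a0 = \<beta>" "\<beta> + a0 - a1 = \<delta>" using assms(4) by (metis add_diff_cancel_right')+
  then have f': "f' a0 = f a0 - Poly_Mapping.single \<beta> c" "f' a1 = f a1 + Poly_Mapping.single \<delta> c"
    "a \<noteq> a0 \<Longrightarrow> a \<noteq> a1 \<Longrightarrow> f' a = f a" for a
    using assms(1)
    by (simp_all add: f'_def c_def binom_syz_def term_vec_def monom_def mult_single)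
  have keys_a0: "Poly_Mapping.keys (f' a0) = Poly_Mapping.keys (f a0) - {\<beta>}"
    unfolding f'(1) by (auto simp: in_keys_iff lookup_minus lookup_single c_def when_def split: if_splits)
  then show "Poly_Mapping.keys (f' a0) \<subset> Poly_Mapping.keys (f a0)" using assms(2) by blast
  show "Poly_Mapping.keys (f' a) \<subseteq> Poly_Mapping.keys (f a)"
  proof -
    have "Poly_Mapping.keys (f' a1) \<subseteq> Poly_Mapping.keys (f a1) \<union> {\<delta>}"
      unfolding f'(2) by (rule order_trans[OF keys_add]) auto
    then show ?thesis using assms(3) keys_a0 f'(3) by (cases "a = a0 \<or> a = a1") auto
  qed
qed

lemma syz_reduction_step:
  fixes f :: "('v \<Rightarrow>\<^sub>0 nat) \<Rightarrow> ('v, 'k::field) mpoly"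
  assumes "f \<in> syz M" "finite M" "a0 \<in> M" "\<beta> \<in> Poly_Mapping.keys (f a0)"
  obtains a1 \<gamma> p where "a1 \<in> M" "le_pm a0 \<gamma>" "le_pm a1 \<gamma>"
    "(\<lambda>a. f a - p * binom_syz \<gamma> a0 a1 a) \<in> syz M"
    "(\<Sum>a\<in>M. card (Poly_Mapping.keys (f a - p * binom_syz \<gamma> a0 a1 a)))
      < (\<Sum>a\<in>M. card (Poly_Mapping.keys (f a)))"
proof -
  obtain a1 \<delta> where a1: "a1 \<in> M" "a1 \<noteq> a0" "\<delta> \<in> Poly_Mapping.keys (f a1)" "\<delta> + a1 = \<beta> + a0"
    using syz_term_cancelled assms by metis
  define p :: "('v, 'k) mpoly" where "p = Poly_Mapping.single 0 (Poly_Mapping.lookup (f a0) \<beta>)"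
  have le: "le_pm a0 (\<beta> + a0)" "le_pm a1 (\<beta> + a0)" using le_pm_add a1(4) by metis+
  then have "(\<lambda>a. p * binom_syz (\<beta> + a0) a0 a1 a) \<in> syz M"
    using assms(2,3) a1(1) by (intro syz_smult binom_syz_mem_syz)
  then have "(\<lambda>a. f a - p * binom_syz (\<beta> + a0) a0 a1 a) \<in> syz M"
    using assms(1) by (rule syz_diff[rotated])
  moreover have "\<forall>a\<in>M. card (Poly_Mapping.keys (f a - p * binom_syz (\<beta> + a0) a0 a1 a))
      \<le> card (Poly_Mapping.keys (f a))"
    "card (Poly_Mapping.keys (f a0 - p * binom_syz (\<beta> + a0) a0 a1 a0)) < card (Poly_Mapping.keys (f a0))"
    using keys_diff_binom_syz[OF a1(2)[symmetric] assms(4) a1(3,4)] unfolding p_def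
    by (simp_all add: card_mono psubset_card_mono)
  then have "(\<Sum>a\<in>M. card (Poly_Mapping.keys (f a - p * binom_syz (\<beta> + a0) a0 a1 a)))
      < (\<Sum>a\<in>M. card (Poly_Mapping.keys (f a)))"
    using assms(2,3) by (intro sum_strict_mono_ex1) auto
  ultimately show ?thesis using that a1(1) le by blast
qed

lemma syz_subset_module_span:
  fixes L :: "(('v \<Rightarrow>\<^sub>0 nat) \<Rightarrow> ('v, 'k::field) mpoly) set"
  assumes "finite M"
    and binom: "\<And>a b \<gamma>. a \<in> M \<Longrightarrow> b \<in> M \<Longrightarrow> le_pm a \<gamma> \<Longrightarrow> le_pm b \<gamma> \<Longrightarrow>
      binom_syz \<gamma> a b \<in> module_span L"
  shows "syz M \<subseteq> module_span L"
proof
  fix f :: "('v \<Rightarrow>\<^sub>0 nat) \<Rightarrow> ('v, 'k) mpoly"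
  assume "f \<in> syz M"
  then show "f \<in> module_span L"
  proof (induction "\<Sum>a\<in>M. card (Poly_Mapping.keys (f a))" arbitrary: f rule: less_induct)
    case less
    show ?case
    proof (cases "\<forall>a\<in>M. f a = 0")
      case True
      then have "f = (\<lambda>a. 0)" using less.prems by (auto simp: syz_def)
      then show ?thesis by (simp add: module_span_zero)
    next
      case False
      then obtain a0 \<beta> where a0: "a0 \<in> M" "\<beta> \<in> Poly_Mapping.keys (f a0)"
        by (metis all_not_in_conv keys_eq_empty)
      obtain a1 \<gamma> p where a1: "a1 \<in> M" "le_pm a0 \<gamma>" "le_pm a1 \<gamma>"
        and reduced: "(\<lambda>a. f a - p * binom_syz \<gamma> a0 a1 a) \<in> syz M"
          "(\<Sum>a\<in>M. card (Poly_Mapping.keys (f a - p * binom_syz \<gamma> a0 a1 a)))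
            < (\<Sum>a\<in>M. card (Poly_Mapping.keys (f a)))"
        by (rule syz_reduction_step[OF less.prems assms(1) a0])
      have "(\<lambda>a. f a - p * binom_syz \<gamma> a0 a1 a) \<in> module_span L"
        using less.hyps[of "\<lambda>a. f a - p * binom_syz \<gamma> a0 a1 a"] reduced by blast
      moreover have "(\<lambda>a. p * binom_syz \<gamma> a0 a1 a) \<in> module_span L"
        using binom a0(1) a1 by (intro module_span_smult)
      ultimately show ?thesis using module_span_add by force
    qed
  qed
qed

section \<open>Linear syzygies of the cover ideal\<close>

(* For D - C = {v} and C - D = {w} this is the linear syzygy t_v e_C - t_w e_D. *)
definition adjacent_cover_syzygies :: "'v set \<Rightarrow> 'v set set \<Rightarrow> (('v \<Rightarrow>\<^sub>0 nat) \<Rightarrow> ('v, 'k::field) mpoly) set"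
  where "adjacent_cover_syzygies V E =
    {binom_syz (sqfree_exp (C \<union> D)) (sqfree_exp C) (sqfree_exp D) | C D.
      minimal_vertex_cover V E C \<and> minimal_vertex_cover V E D \<and> card (C - D) = 1 \<and> card (D - C) = 1}"

context finite_simple_graph
begin

lemma finite_minimal_vertex_cover: "minimal_vertex_cover V E C \<Longrightarrow> finite C"
  using minimal_vertex_cover_iff finite_vertices finite_subset by blast

lemma finite_minimal_vertex_covers: "finite {C. minimal_vertex_cover V E C}"
  using minimal_vertex_cover_iff finite_vertices by (auto intro: finite_subset[of _ "Pow V"])

lemma min_monomial_gens_cover_ideal:
  "min_monomial_gens (cover_ideal V E :: ('v, 'k::field) mpoly set) =
    sqfree_exp ` {C. minimal_vertex_cover V E C}"
proof -
  have "cover_ideal V E = (ideal_gen (monom ` sqfree_exp ` {C. minimal_vertex_cover V E C}) :: ('v, 'k) mpoly set)"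
  proof -
    have "{monom (sqfree_exp C) :: ('v, 'k) mpoly |C. minimal_vertex_cover V E C} =
        monom ` sqfree_exp ` {C. minimal_vertex_cover V E C}" by blast
    then show ?thesis by (simp add: cover_ideal_def)
  qed
  moreover have "C = D" if "minimal_vertex_cover V E C" "minimal_vertex_cover V E D"
    "le_pm (sqfree_exp C) (sqfree_exp D)" for C D
    using that le_pm_sqfree_exp_iff finite_minimal_vertex_cover
    by (metis minimal_vertex_cover_def psubsetI)
  then have "a = b" if "a \<in> sqfree_exp ` {C. minimal_vertex_cover V E C}"
    "b \<in> sqfree_exp ` {C. minimal_vertex_cover V E C}" "le_pm a b" for a b
    using that by blast
  ultimately show ?thesis by (simp add: min_monomial_gens_ideal_gen)
qed

lemma unmixed_tdeg_eq:
  assumes "unmixed V E" "a \<in> sqfree_exp ` {C. minimal_vertex_cover V E C}"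
    "b \<in> sqfree_exp ` {C. minimal_vertex_cover V E C}"
  shows "tdeg a = tdeg b"
proof -
  obtain C D where "a = sqfree_exp C" "b = sqfree_exp D"
    "minimal_vertex_cover V E C" "minimal_vertex_cover V E D" using assms(2,3) by blast
  moreover have "card C = card D" using assms(1) calculation(3,4) unfolding unmixed_def by blast
  ultimately show ?thesis using finite_minimal_vertex_cover by (simp add: tdeg_sqfree_exp)
qed

lemma adjacent_cover_syzygies_subset_syz:
  "adjacent_cover_syzygies V E \<subseteq> (syz (sqfree_exp ` {C. minimal_vertex_cover V E C}) :: (_ \<Rightarrow> ('v, 'k::field) mpoly) set)"
proof
  fix g :: "_ \<Rightarrow> ('v, 'k) mpoly"
  assume "g \<in> adjacent_cover_syzygies V E"
  then obtain C D where "g = binom_syz (sqfree_exp (C \<union> D)) (sqfree_exp C) (sqfree_exp D)"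
    "minimal_vertex_cover V E C" "minimal_vertex_cover V E D"
    by (auto simp: adjacent_cover_syzygies_def)
  then show "g \<in> syz (sqfree_exp ` {C. minimal_vertex_cover V E C})"
    using finite_minimal_vertex_cover finite_minimal_vertex_covers
    by (auto intro!: binom_syz_mem_syz simp: le_pm_sqfree_exp_iff)
qed

lemma adjacent_cover_syzygies_linear:
  assumes "g \<in> (adjacent_cover_syzygies V E :: (_ \<Rightarrow> ('v, 'k::field) mpoly) set)"
  shows "linear_form (g a)"
proof -
  obtain C D where g: "g = binom_syz (sqfree_exp (C \<union> D)) (sqfree_exp C) (sqfree_exp D)"
    and CD: "minimal_vertex_cover V E C" "minimal_vertex_cover V E D" "card (C - D) = 1" "card (D - C) = 1"
    using assms by (auto simp: adjacent_cover_syzygies_def)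
  have "finite C" "finite D" using CD finite_minimal_vertex_cover by auto
  then have "tdeg (sqfree_exp (C \<union> D) - sqfree_exp C) = 1" "tdeg (sqfree_exp (D \<union> C) - sqfree_exp D) = 1"
    using CD(3,4) by (simp_all add: sqfree_exp_Un_diff tdeg_sqfree_exp)
  then show ?thesis unfolding g by (intro linear_form_binom_syz) (simp_all add: Un_commute)
qed

end

context well_covered_graph
begin

lemma exchange_step_adjacent_cover_syzygy:
  assumes "exchange_step V E S X Y"
  shows "binom_syz (sqfree_exp ((V - X) \<union> (V - Y))) (sqfree_exp (V - X)) (sqfree_exp (V - Y))
    \<in> (adjacent_cover_syzygies V E :: (_ \<Rightarrow> ('v, 'k::field) mpoly) set)"
proof -
  have X: "max_indep_set V E X" and Y: "max_indep_set V E Y" and "card (X - Y) = 1"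
    using assms by (auto simp: exchange_step_def)
  moreover have "finite X" "finite Y" using X Y finite_indep_set by (auto simp: max_indep_set_def)
  moreover have "card X = card Y" using X Y max_indep_set_card_eq by blast
  ultimately have "card (Y - X) = 1"
    by (metis card_Diff_subset_Int Int_commute finite_Int)
  moreover have "(V - X) - (V - Y) = Y - X" "(V - Y) - (V - X) = X - Y"
    using X Y max_indep_set_subset_vertices by auto
  ultimately show ?thesis
    unfolding adjacent_cover_syzygies_def
    using minimal_vertex_cover_complement[OF X] minimal_vertex_cover_complement[OF Y]
      \<open>card (X - Y) = 1\<close> by (intro CollectI exI[of _ "V - X"] exI[of _ "V - Y"]) simp
qed

lemma exchange_path_binom_syz_mem_span:
  assumes "(exchange_step V E S)\<^sup>*\<^sup>* X Y" "le_pm (sqfree_exp (V - S)) \<gamma>"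
  shows "binom_syz \<gamma> (sqfree_exp (V - X)) (sqfree_exp (V - Y))
    \<in> module_span (adjacent_cover_syzygies V E :: (_ \<Rightarrow> ('v, 'k::field) mpoly) set)"
  using assms(1)
proof (induction rule: rtranclp_induct)
  case base
  show ?case by (simp add: binom_syz_self module_span_zero)
next
  case (step Y Z)
  define \<delta> where "\<delta> = sqfree_exp ((V - Y) \<union> (V - Z))"
  have "S \<subseteq> Y \<inter> Z" using step(2) by (simp add: exchange_step_def)
  then have "le_pm \<delta> (sqfree_exp (V - S))"
    using finite_vertices by (auto simp: \<delta>_def le_pm_sqfree_exp_iff)
  then have "le_pm \<delta> \<gamma>" using assms(2) le_pm_trans by blast
  moreover have "le_pm (sqfree_exp (V - Y)) \<delta>" "le_pm (sqfree_exp (V - Z)) \<delta>"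
    using finite_vertices by (auto simp: \<delta>_def le_pm_sqfree_exp_iff)
  ultimately have "binom_syz \<gamma> (sqfree_exp (V - Y)) (sqfree_exp (V - Z))
      \<in> module_span (adjacent_cover_syzygies V E :: (_ \<Rightarrow> ('v, 'k) mpoly) set)"
    using exchange_step_adjacent_cover_syzygy[OF step(2)] monom_mult_binom_syz
    by (metis \<delta>_def module_span_base module_span_smult)
  from module_span_add[OF step(3) this] show ?case by (simp add: binom_syz_trans)
qed

end

context well_covered_C4_free_graph
begin

lemma binom_syz_covers_mem_span:
  assumes "minimal_vertex_cover V E C" "minimal_vertex_cover V E D"
    and "le_pm (sqfree_exp C) \<gamma>" "le_pm (sqfree_exp D) \<gamma>"
  shows "binom_syz \<gamma> (sqfree_exp C) (sqfree_exp D)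
    \<in> module_span (adjacent_cover_syzygies V E :: (_ \<Rightarrow> ('v, 'k::field) mpoly) set)"
proof -
  have "C \<subseteq> V" "D \<subseteq> V" and max: "max_indep_set V E (V - C)" "max_indep_set V E (V - D)"
    using assms(1,2) minimal_vertex_cover_iff by auto
  then have complements: "V - (V - C) = C" "V - (V - D) = D" "V - ((V - C) \<inter> (V - D)) = C \<union> D"
    by auto
  have "le_pm (sqfree_exp (C \<union> D)) \<gamma>"
    using assms finite_minimal_vertex_cover le_pm_sqfree_exp_Un by blast
  then have "binom_syz \<gamma> (sqfree_exp (V - (V - C))) (sqfree_exp (V - (V - D)))
    \<in> module_span (adjacent_cover_syzygies V E :: (_ \<Rightarrow> ('v, 'k) mpoly) set)"
    by (intro exchange_path_binom_syz_mem_span[OF exchange_path[OF max order_refl]])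
      (simp only: complements)
  then show ?thesis by (simp only: complements)
qed

lemma syz_cover_gens_subset_span:
  "syz (sqfree_exp ` {C. minimal_vertex_cover V E C})
    \<subseteq> module_span (adjacent_cover_syzygies V E :: (_ \<Rightarrow> ('v, 'k::field) mpoly) set)"
proof (rule syz_subset_module_span)
  show "finite (sqfree_exp ` {C. minimal_vertex_cover V E C})"
    using finite_minimal_vertex_covers by simp
next
  fix a b \<gamma> assume "a \<in> sqfree_exp ` {C. minimal_vertex_cover V E C}"
    "b \<in> sqfree_exp ` {C. minimal_vertex_cover V E C}" "le_pm a \<gamma>" "le_pm b \<gamma>"
  then show "binom_syz \<gamma> a b \<in> module_span (adjacent_cover_syzygies V E :: (_ \<Rightarrow> ('v, 'k) mpoly) set)"
    using binom_syz_covers_mem_span by blast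
qed

end

theorem theorem5p13:
  fixes V :: "'v set" and E :: "'v set set"
  assumes "simple_graph V E"
    and "unmixed V E"
    and "\<not> has_induced_C4 V E"
  shows "linearly_presented (cover_ideal V E :: ('v, 'k::field) mpoly set)"
proof -
  interpret well_covered_C4_free_graph V E
  proof unfold_locales
    show "max_indep_set V E A \<Longrightarrow> max_indep_set V E B \<Longrightarrow> card A = card B" for A B
      by (rule finite_simple_graph.unmixed_max_indep_set_card_eq[OF _ assms(2)])
        (rule finite_simple_graph.intro[OF assms(1)])
    show "simple_graph V E" "\<not> has_induced_C4 V E" by (fact assms(1), fact assms(3))
  qed
  let ?M = "sqfree_exp ` {C. minimal_vertex_cover V E C}"
  let ?L = "adjacent_cover_syzygies V E :: (_ \<Rightarrow> ('v, 'k) mpoly) set"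
  have "finite ?M" using finite_minimal_vertex_covers by simp
  moreover have "\<forall>a\<in>?M. \<forall>b\<in>?M. tdeg a = tdeg b" using unmixed_tdeg_eq[OF assms(2)] by blast
  moreover have "?L \<subseteq> syz ?M" "\<forall>g\<in>?L. \<forall>a\<in>?M. linear_form (g a)" "syz ?M \<subseteq> module_span ?L"
    using adjacent_cover_syzygies_subset_syz adjacent_cover_syzygies_linear syz_cover_gens_subset_span
    by blast+
  ultimately show ?thesis
    unfolding linearly_presented_def Let_def min_monomial_gens_cover_ideal by blast
qed

end
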